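(* Let $\mathcal{J}$ be an ideal on $\omega$ which is good. Then $\min\{\mathrm{cov}^{+}_{h}(\mathcal{J}),\mathfrak{b}\}\leq\mathfrak{a}(\mathcal{J})$.
   Context: An ideal on a countable set $X$ is a family of subsets of $X$ closed under subsets and finite unions, containing all finite sets and not containing $X$. $\mathcal{J}^{+}=\mathcal{P}(\omega)\setminus\mathcal{J}$ denotes the $\mathcal{J}$-positive sets. For $X\in\mathcal{J}^+$, $\mathcal{J}|_X=\{A\subseteq X: A\in\mathcal{J}\}$, an ideal on $X$. $\mathfrak{a}(\mathcal{J})$ is the smallest size of an uncountable family $\mathcal{A}\subseteq\mathcal{J}^{+}$ which is maximal with respect to the property that $A\cap B\in\mathcal{J}$ for all distinct $A,B\in\mathcal{A}$. $\mathrm{cov}^{+}(\mathcal{J})=\min\{|\mathcal{F}|:\mathcal{F}\subseteq\mathcal{J}$ and for every $X\in\mathcal{J}^{+}$ there is $F\in\mathcal{F}$ with $|X\cap F|=\omega\}$, and $\mathrm{cov}^{+}_{h}(\mathcal{J})=\min\{\mathrm{cov}^{+}(\mathcal{J}|_{X}):X\in\mathcal{J}^{+}\}$. $\mathfrak{b}$ is the least size of a family in $\omega^\omega$ unbounded with respect to eventual domination $\leq^*$. $\mathcal{J}$ is called good if every uncountable family $\mathcal{F}\subseteq\mathcal{J}^{+}$ has a subfamily $\{B_{n}:n\in\omega\}\subseteq\mathcal{F}$ such that for every $f\in\omega^{\omega}$ there is a sequence $\{C_{n}:n\in\omega\}\subseteq\mathcal{J}$ with $C_{n}\subseteq B_{n}\setminus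 f(n)$ for every $n$ such that $\bigcup_{n}C_{n}\in\mathcal{J}^{+}$. *)

theory Defs
  imports Main "HOL-Library.Equipollence" "HOL-Library.Countable_Set"
begin

definition is_ideal :: "nat set set \<Rightarrow> bool" where
  "is_ideal J \<longleftrightarrow>
     (\<forall>A B. A \<in> J \<longrightarrow> B \<subseteq> A \<longrightarrow> B \<in> J) \<and>
     (\<forall>A B. A \<in> J \<longrightarrow> B \<in> J \<longrightarrow> A \<union> B \<in> J) \<and>
     (\<forall>A. finite A \<longrightarrow> A \<in> J) \<and>
     UNIV \<notin> J"

definition positive :: "nat set set \<Rightarrow> nat set set" where
  "positive J = - J"

definition restr :: "nat set set \<Rightarrow> nat set \<Rightarrow> nat set set" where
  "restr J X = {A. A \<subseteq> X \<and> A \<in> J}"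

text \<open>Uncountable families maximal with respect to J-almost disjointness
  (the families over which a(J) is the minimum).\<close>
definition max_J_AD :: "nat set set \<Rightarrow> nat set set \<Rightarrow> bool" where
  "max_J_AD J \<A> \<longleftrightarrow>
     \<not> countable \<A> \<and> \<A> \<subseteq> positive J \<and>
     (\<forall>A\<in>\<A>. \<forall>B\<in>\<A>. A \<noteq> B \<longrightarrow> A \<inter> B \<in> J) \<and>
     (\<forall>B \<in> positive J. B \<notin> \<A> \<longrightarrow> (\<exists>A\<in>\<A>. A \<inter> B \<notin> J))"

text \<open>Witness families for cov+(J|X): F \<subseteq> J|X such that every
  (J|X)-positive set meets some member of F in an infinite set.\<close>
definition cov_plus_family :: "nat set set \<Rightarrow> nat set \<Rightarrow> nat set set \<Rightarrow> bool" where
  "cov_plus_family J X \<F> \<longleftrightarrow>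
     \<F> \<subseteq> restr J X \<and>
     (\<forall>Y. Y \<subseteq> X \<and> Y \<notin> restr J X \<longrightarrow> (\<exists>F\<in>\<F>. infinite (Y \<inter> F)))"

text \<open>Eventual domination and unbounded families (witnesses for b).\<close>
definition le_star :: "(nat \<Rightarrow> nat) \<Rightarrow> (nat \<Rightarrow> nat) \<Rightarrow> bool" where
  "le_star f g \<longleftrightarrow> (\<forall>\<^sub>F n in sequentially. f n \<le> g n)"

definition unbounded_family :: "(nat \<Rightarrow> nat) set \<Rightarrow> bool" where
  "unbounded_family U \<longleftrightarrow> \<not> (\<exists>g. \<forall>f\<in>U. le_star f g)"

text \<open>Good ideals.  The subfamily {B_n : n \<in> omega} is an injective enumeration.
  B_n \<setminus> f(n) means B_n minus the natural number f(n) = {0..<f n}.\<close>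
definition good :: "nat set set \<Rightarrow> bool" where
  "good J \<longleftrightarrow>
     (\<forall>\<F>. \<F> \<subseteq> positive J \<and> \<not> countable \<F> \<longrightarrow>
        (\<exists>B :: nat \<Rightarrow> nat set. inj B \<and> range B \<subseteq> \<F> \<and>
           (\<forall>f :: nat \<Rightarrow> nat. \<exists>C :: nat \<Rightarrow> nat set.
              (\<forall>n. C n \<in> J \<and> C n \<subseteq> B n - {0..<f n}) \<and>
              (\<Union>n. C n) \<in> positive J)))"

end

theory Submission
  imports Defs
begin

text \<open>Let \<A> be an uncountable maximal J-almost disjoint family. If for some A \<in> \<A> the traces
  A \<inter> A' (A' \<in> \<A>, A' \<noteq> A) witness cov+(J|A), we are done. Otherwise every A \<in> \<A> contains a
  J-positive Y A that is almost disjoint from all other members of \<A>. Goodness, applied to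
  the uncountable family of the Y A, yields an injective sequence B n = Y (A_n). For A \<in> \<A>
  let h_A n bound the finite sets A \<inter> B n. If the h_A are dominated by a single g, goodness
  gives C n \<in> J with C n \<subseteq> B n - g n and Z = \<Union>n. C n J-positive; but every A meets only
  finitely many C n, so Z \<inter> A \<in> J for all A \<in> \<A>, contradicting maximality. Hence the
  h_A form an unbounded family of size at most |\<A>|.\<close>

lemma ideal_subset: "is_ideal J \<Longrightarrow> A \<in> J \<Longrightarrow> B \<subseteq> A \<Longrightarrow> B \<in> J"
  unfolding is_ideal_def by metis

lemma ideal_Un: "is_ideal J \<Longrightarrow> A \<in> J \<Longrightarrow> B \<in> J \<Longrightarrow> A \<union> B \<in> J"
  unfolding is_ideal_def by metis

lemma ideal_finite: "is_ideal J \<Longrightarrow> finite A \<Longrightarrow> A \<in> J"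
  unfolding is_ideal_def by metis

lemma ideal_finite_UN:
  assumes "is_ideal J" "finite S" "\<And>n. n \<in> S \<Longrightarrow> C n \<in> J"
  shows "(\<Union>n\<in>S. C n) \<in> J"
  using assms(2,3)
proof (induction S rule: finite_induct)
  case empty
  show ?case using ideal_finite[OF assms(1)] by simp
next
  case (insert x S)
  then show ?case using ideal_Un[OF assms(1)] by simp
qed

lemma ideal_Int_UN_if_finitely_many_meet:
  assumes "is_ideal J" "\<And>n. C n \<in> J" "finite {n. A \<inter> C n \<noteq> {}}"
  shows "A \<inter> (\<Union>n. C n) \<in> J"
proof (rule ideal_subset[OF assms(1)])
  show "(\<Union>n\<in>{n. A \<inter> C n \<noteq> {}}. C n) \<in> J"
    by (rule ideal_finite_UN[OF assms(1,3)]) (rule assms(2))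
  show "A \<inter> (\<Union>n. C n) \<subseteq> (\<Union>n\<in>{n. A \<inter> C n \<noteq> {}}. C n)"
    by blast
qed

lemma goodE:
  assumes "good J" "\<F> \<subseteq> positive J" "\<not> countable \<F>"
  obtains B :: "nat \<Rightarrow> nat set" where "inj B" "range B \<subseteq> \<F>"
    "\<forall>f. \<exists>C. (\<forall>n. C n \<in> J \<and> C n \<subseteq> B n - {0..<f n}) \<and> (\<Union>n. C n) \<in> positive J"
proof -
  have "\<exists>B :: nat \<Rightarrow> nat set. inj B \<and> range B \<subseteq> \<F> \<and>
      (\<forall>f. \<exists>C. (\<forall>n. C n \<in> J \<and> C n \<subseteq> B n - {0..<f n}) \<and> (\<Union>n. C n) \<in> positive J)"
    using assms unfolding good_def by simp
  then show ?thesis using that by (elim exE conjE)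
qed

lemma max_J_AD_meets_positive:
  assumes "max_J_AD J \<A>" "Z \<in> positive J"
  obtains A where "A \<in> \<A>" "A \<inter> Z \<notin> J"
proof (cases "Z \<in> \<A>")
  case True
  moreover have "Z \<inter> Z \<notin> J" using assms(2) unfolding positive_def by simp
  ultimately show ?thesis by (rule that)
next
  case False
  have "\<forall>B \<in> positive J. B \<notin> \<A> \<longrightarrow> (\<exists>A\<in>\<A>. A \<inter> B \<notin> J)"
    using assms(1) unfolding max_J_AD_def by (elim conjE)
  then show ?thesis using False assms(2) that by blast
qed

definition traces :: "nat set \<Rightarrow> nat set set \<Rightarrow> nat set set" where
  "traces A \<A> = (\<lambda>A'. A \<inter> A') ` (\<A> - {A})"

lemma traces_lepoll: "traces A \<A> \<lesssim> \<A>"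
proof -
  have "traces A \<A> \<lesssim> \<A> - {A}"
    unfolding traces_def by (rule image_lepoll)
  also have "\<A> - {A} \<lesssim> \<A>"
    by (rule subset_imp_lepoll) blast
  finally show ?thesis .
qed

lemma not_cov_plus_traces_imp_almost_disjoint_subset:
  assumes AD: "\<forall>A\<in>\<A>. \<forall>B\<in>\<A>. A \<noteq> B \<longrightarrow> A \<inter> B \<in> J"
    and "A \<in> \<A>" and "\<not> cov_plus_family J A (traces A \<A>)"
  shows "\<exists>Y. Y \<subseteq> A \<and> Y \<notin> J \<and> (\<forall>A'\<in>\<A>. A' \<noteq> A \<longrightarrow> finite (Y \<inter> A'))"
proof -
  have "traces A \<A> \<subseteq> restr J A"
    using AD \<open>A \<in> \<A>\<close> unfolding traces_def restr_def by blast
  with assms(3) obtain Y where Y: "Y \<subseteq> A" "Y \<notin> restr J A"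
      and fin: "\<And>F. F \<in> traces A \<A> \<Longrightarrow> finite (Y \<inter> F)"
    unfolding cov_plus_family_def by blast
  have "finite (Y \<inter> A')" if "A' \<in> \<A>" "A' \<noteq> A" for A'
  proof -
    have "finite (Y \<inter> (A \<inter> A'))" using fin that unfolding traces_def by blast
    moreover have "Y \<inter> A' = Y \<inter> (A \<inter> A')" using Y(1) by blast
    ultimately show ?thesis by simp
  qed
  with Y show ?thesis unfolding restr_def by blast
qed

lemma inj_on_almost_disjoint_infinite_subsets:
  assumes "\<And>A. A \<in> \<A> \<Longrightarrow> Y A \<subseteq> A \<and> infinite (Y A)"
    and "\<And>A A'. A \<in> \<A> \<Longrightarrow> A' \<in> \<A> \<Longrightarrow> A' \<noteq> A \<Longrightarrow> finite (Y A \<inter> A')"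
  shows "inj_on Y \<A>"
proof (rule inj_onI, rule ccontr)
  fix A A' assume A: "A \<in> \<A>" "A' \<in> \<A>" "Y A = Y A'" "A \<noteq> A'"
  then have "Y A \<inter> A' = Y A" using assms(1) by (metis inf.absorb1)
  then show False using assms A by metis
qed

text \<open>The function h_A of the proof. Its value 0 on infinite traces is irrelevant: by almost
  disjointness these occur only finitely often.\<close>

definition trace_bound :: "nat set \<Rightarrow> (nat \<Rightarrow> nat set) \<Rightarrow> nat \<Rightarrow> nat" where
  "trace_bound A B n = (if finite (A \<inter> B n) then Suc (Max (A \<inter> B n)) else 0)"

lemma trace_bound_disjoint:
  assumes "finite (A \<inter> B n)" "trace_bound A B n \<le> m"
  shows "A \<inter> (B n - {0..<m}) = {}"
proof -
  have "x < m" if "x \<in> A \<inter> B n" for x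
  proof -
    have "x \<le> Max (A \<inter> B n)" using assms(1) that by (rule Max_ge)
    then show ?thesis using assms unfolding trace_bound_def by simp
  qed
  then show ?thesis by auto
qed

lemma finite_infinite_traces:
  assumes "inj B" "range B \<subseteq> Y ` \<A>" "A \<in> \<A>"
    and "\<And>A'. A' \<in> \<A> \<Longrightarrow> A' \<noteq> A \<Longrightarrow> finite (Y A' \<inter> A)"
  shows "finite {n. infinite (A \<inter> B n)}"
proof (rule finite_subset)
  show "{n. infinite (A \<inter> B n)} \<subseteq> B -` {Y A}"
    using assms(2,4) by (force simp: Int_commute)
  show "finite (B -` {Y A})"
    using assms(1) by (simp add: finite_vimageI)
qed

lemma finitely_many_meet_if_trace_bound_dominated:
  assumes "le_star (trace_bound A B) g" "\<And>n. C n \<subseteq> B n - {0..<g n}"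
    and "finite {n. infinite (A \<inter> B n)}"
  shows "finite {n. A \<inter> C n \<noteq> {}}"
proof -
  obtain N where N: "\<And>n. n \<ge> N \<Longrightarrow> trace_bound A B n \<le> g n"
    using assms(1) unfolding le_star_def eventually_sequentially by blast
  have "{n. A \<inter> C n \<noteq> {}} \<subseteq> {..<N} \<union> {n. infinite (A \<inter> B n)}"
  proof
    fix n assume "n \<in> {n. A \<inter> C n \<noteq> {}}"
    moreover have "A \<inter> C n = {}" if "n \<ge> N" "finite (A \<inter> B n)"
      using trace_bound_disjoint[OF that(2) N[OF that(1)]] assms(2)[of n] by blast
    ultimately show "n \<in> {..<N} \<union> {n. infinite (A \<inter> B n)}" by force
  qed
  then show ?thesis using assms(3) finite_subset by blast
qed

lemma good_almost_disjoint_subsets_imp_unbounded: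
  assumes "is_ideal J" "good J" "max_J_AD J \<A>"
    and Y: "\<And>A. A \<in> \<A> \<Longrightarrow> Y A \<subseteq> A \<and> Y A \<notin> J"
    and Y_AD: "\<And>A A'. A \<in> \<A> \<Longrightarrow> A' \<in> \<A> \<Longrightarrow> A' \<noteq> A \<Longrightarrow> finite (Y A \<inter> A')"
  shows "\<exists>U. unbounded_family U \<and> U \<lesssim> \<A>"
proof -
  have "Y A \<subseteq> A \<and> infinite (Y A)" if "A \<in> \<A>" for A
    using Y[OF that] ideal_finite[OF assms(1)] by blast
  then have "inj_on Y \<A>"
    using Y_AD by (rule inj_on_almost_disjoint_infinite_subsets)
  moreover have "\<not> countable \<A>"
    using assms(3) unfolding max_J_AD_def by (elim conjE)
  ultimately have uncountable: "\<not> countable (Y ` \<A>)"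
    using countable_image_inj_on by blast
  have positive: "Y ` \<A> \<subseteq> positive J"
    using Y unfolding positive_def by blast
  obtain B :: "nat \<Rightarrow> nat set" where B: "inj B" "range B \<subseteq> Y ` \<A>"
      and B_good: "\<forall>f. \<exists>C. (\<forall>n. C n \<in> J \<and> C n \<subseteq> B n - {0..<f n}) \<and> (\<Union>n. C n) \<in> positive J"
    by (rule goodE[OF assms(2) positive uncountable])
  have "unbounded_family ((\<lambda>A. trace_bound A B) ` \<A>)"
    unfolding unbounded_family_def
  proof
    assume "\<exists>g. \<forall>f\<in>(\<lambda>A. trace_bound A B) ` \<A>. le_star f g"
    then obtain g where g: "\<And>A. A \<in> \<A> \<Longrightarrow> le_star (trace_bound A B) g"
      by blast
    obtain C where C: "\<And>n. C n \<in> J" "\<And>n. C n \<subseteq> B n - {0..<g n}"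
        and Z: "(\<Union>n. C n) \<in> positive J"
      using B_good by blast
    have "A \<inter> (\<Union>n. C n) \<in> J" if A: "A \<in> \<A>" for A
    proof -
      have "finite {n. infinite (A \<inter> B n)}"
        using B A by (rule finite_infinite_traces) (use A Y_AD in blast)
      with g[OF A] C(2) have "finite {n. A \<inter> C n \<noteq> {}}"
        by (rule finitely_many_meet_if_trace_bound_dominated)
      with assms(1) C(1) show ?thesis
        by (rule ideal_Int_UN_if_finitely_many_meet)
    qed
    moreover obtain A where "A \<in> \<A>" "A \<inter> (\<Union>n. C n) \<notin> J"
      using assms(3) Z by (rule max_J_AD_meets_positive)
    ultimately show False by blast
  qed
  moreover have "(\<lambda>A. trace_bound A B) ` \<A> \<lesssim> \<A>"
    by (rule image_lepoll)
  ultimately show ?thesis by blast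
qed

theorem mainTheorem1:
  fixes J :: "nat set set"
  assumes "is_ideal J" and "good J"
  shows "\<forall>\<A>. max_J_AD J \<A> \<longrightarrow>
           (\<exists>X \<in> positive J. \<exists>\<F>. cov_plus_family J X \<F> \<and> \<F> \<lesssim> \<A>) \<or>
           (\<exists>U. unbounded_family U \<and> U \<lesssim> \<A>)"
proof (intro allI impI)
  fix \<A> assume max: "max_J_AD J \<A>"
  from max have AD: "\<forall>A\<in>\<A>. \<forall>B\<in>\<A>. A \<noteq> B \<longrightarrow> A \<inter> B \<in> J"
    unfolding max_J_AD_def by (elim conjE)
  from max have pos: "\<A> \<subseteq> positive J"
    unfolding max_J_AD_def by (elim conjE)
  show "(\<exists>X \<in> positive J. \<exists>\<F>. cov_plus_family J X \<F> \<and> \<F> \<lesssim> \<A>) \<or>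
        (\<exists>U. unbounded_family U \<and> U \<lesssim> \<A>)"
  proof (cases "\<exists>A\<in>\<A>. cov_plus_family J A (traces A \<A>)")
    case True
    then show ?thesis using pos traces_lepoll by blast
  next
    case False
    have "\<forall>A\<in>\<A>. \<exists>Y. Y \<subseteq> A \<and> Y \<notin> J \<and> (\<forall>A'\<in>\<A>. A' \<noteq> A \<longrightarrow> finite (Y \<inter> A'))"
      using not_cov_plus_traces_imp_almost_disjoint_subset[OF AD] False by blast
    from bchoice[OF this] obtain Y
      where Y: "\<forall>A\<in>\<A>. Y A \<subseteq> A \<and> Y A \<notin> J \<and> (\<forall>A'\<in>\<A>. A' \<noteq> A \<longrightarrow> finite (Y A \<inter> A'))"
      by blast
    have "\<exists>U. unbounded_family U \<and> U \<lesssim> \<A>"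
      using assms max by (rule good_almost_disjoint_subsets_imp_unbounded) (use Y in blast)+
    then show ?thesis ..
  qed
qed

end
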